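(* Let $(\mathcal{P},+)$ be a reparametrization category. For all $\ell',\ell''\in\mathrm{Obj}(\mathcal{P})$ there is an isomorphism of $\mathcal{P}$-spaces, natural with respect to $\ell'$ and $\ell''$, \[\int^{\ell}\mathcal{P}(-,\ell'+\ell)\times\mathcal{P}(\ell,\ell'')\cong\mathcal{P}(-,\ell'+\ell''),\] which takes the equivalence class of $(\psi,\phi)\in\mathcal{P}(-,\ell'+\ell)\times\mathcal{P}(\ell,\ell'')$ to $(\mathrm{id}_{\ell'}\otimes\phi)\psi$.
   Context: All enriched categories are enriched over the cartesian closed category $\mathbf{Top}$ of ($\Delta$-generated) topological spaces. A reparametrization category is a small enriched semimonoidal category $(\mathcal{P},\otimes)$ (enriched meaning the hom-sets are spaces, composition is continuous and $\mathcal{P}(a,b)\times\mathcal{P}(c,d)\to\mathcal{P}(a\otimes c,b\otimes d)$ is continuous) such that: (1) the semimonoidal structure is strict; (2) all spaces $\mathcal{P}(\ell,\ell')$ are contractible; (3) for every map $\phi:\ell\to\ell'$ and all objects $\ell'_1,\ell'_2$ with $\ell'_1\otimes\ell'_2=\ell'$, there exist maps $\phi_1:\ell_1\to\ell'_1$, $\phi_2:\ell_2\to\ell'_2$ with $\phi=\phi_1\otimes\phi_2$. One writes $\ell+\ell':=\ell\otimes\ell'$ on objects. A $\mathcal{P}$-space is an enriched functor $\mathcal{P}^{op}\to\mathbf{Top}$; the coend is taken in the category of $\mathcal{P}$-spaces. *)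

theory Defs
  imports "HOL-Analysis.Analysis" "HOL-Homology.Simplices"
begin

definition simplex_top :: "nat \<Rightarrow> (nat \<Rightarrow> real) topology" where
  "simplex_top n = subtopology (powertop_real UNIV) (standard_simplex n)"

definition dgen :: "'a topology \<Rightarrow> 'a topology" where
  "dgen X = topology (\<lambda>U. U \<subseteq> topspace X \<and>
      (\<forall>n \<sigma>. continuous_map (simplex_top n) X \<sigma> \<longrightarrow>
          openin (simplex_top n) {x \<in> standard_simplex n. \<sigma> x \<in> U}))"

definition delta_generated :: "'a topology \<Rightarrow> bool" where
  "delta_generated X \<longleftrightarrow> dgen X = X"

definition dprod :: "'a topology \<Rightarrow> 'b topology \<Rightarrow> ('a \<times> 'b) topology" where
  "dprod X Y = dgen (prod_topology X Y)"

definition dcontractible :: "'a topology \<Rightarrow> bool" where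
  "dcontractible X \<longleftrightarrow> (\<exists>a h. a \<in> topspace X \<and>
      continuous_map (dprod (top_of_set {0..1::real}) X) X h \<and>
      (\<forall>x \<in> topspace X. h (0, x) = x \<and> h (1, x) = a))"

definition quot_top :: "'a topology \<Rightarrow> ('a \<times> 'a) set \<Rightarrow> 'a set topology" where
  "quot_top X R = topology (\<lambda>U. U \<subseteq> topspace X // R \<and>
      openin X {x \<in> topspace X. R `` {x} \<in> U})"

text \<open>Hom a b : the hom-space P(a,b) (its carrier is the hom-set).
  Cmp a b c g f : composite g \<circ> f of f : a \<rightarrow> b and g : b \<rightarrow> c.
  Tm a b c d f g : f \<otimes> g : a \<otimes> c \<rightarrow> b \<otimes> d for f : a \<rightarrow> b, g : c \<rightarrow> d.\<close>

record ('o, 'm) smcat =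
  Hom :: "'o \<Rightarrow> 'o \<Rightarrow> 'm topology"
  Cmp :: "'o \<Rightarrow> 'o \<Rightarrow> 'o \<Rightarrow> 'm \<Rightarrow> 'm \<Rightarrow> 'm"
  Idm :: "'o \<Rightarrow> 'm"
  Ot  :: "'o \<Rightarrow> 'o \<Rightarrow> 'o"
  Tm  :: "'o \<Rightarrow> 'o \<Rightarrow> 'o \<Rightarrow> 'o \<Rightarrow> 'm \<Rightarrow> 'm \<Rightarrow> 'm"

abbreviation hom :: "('o, 'm) smcat \<Rightarrow> 'o \<Rightarrow> 'o \<Rightarrow> 'm set" where
  "hom P a b \<equiv> topspace (Hom P a b)"

definition enriched_category :: "('o, 'm, 'z) smcat_scheme \<Rightarrow> bool" where
  "enriched_category P \<longleftrightarrow>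
     (\<forall>a b. delta_generated (Hom P a b)) \<and>
     (\<forall>a. Idm P a \<in> topspace (Hom P a a)) \<and>
     (\<forall>a b c f g. f \<in> topspace (Hom P a b) \<and> g \<in> topspace (Hom P b c) \<longrightarrow>
        Cmp P a b c g f \<in> topspace (Hom P a c)) \<and>
     (\<forall>a b f. f \<in> topspace (Hom P a b) \<longrightarrow>
        Cmp P a a b f (Idm P a) = f \<and> Cmp P a b b (Idm P b) f = f) \<and>
     (\<forall>a b c d f g h. f \<in> topspace (Hom P a b) \<and> g \<in> topspace (Hom P b c) \<and>
        h \<in> topspace (Hom P c d) \<longrightarrow>
        Cmp P a c d h (Cmp P a b c g f) = Cmp P a b d (Cmp P b c d h g) f) \<and>
     (\<forall>a b c. continuous_map (dprod (Hom P b c) (Hom P a b)) (Hom P a c)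
        (\<lambda>(g, f). Cmp P a b c g f))"

definition strict_semimonoidal :: "('o, 'm, 'z) smcat_scheme \<Rightarrow> bool" where
  "strict_semimonoidal P \<longleftrightarrow>
     enriched_category P \<and>
     \<comment> \<open>bifunctor: well-typed, preserves identities and composition, continuous\<close>
     (\<forall>a b c d f g. f \<in> topspace (Hom P a b) \<and> g \<in> topspace (Hom P c d) \<longrightarrow>
        Tm P a b c d f g \<in> topspace (Hom P (Ot P a c) (Ot P b d))) \<and>
     (\<forall>a c. Tm P a a c c (Idm P a) (Idm P c) = Idm P (Ot P a c)) \<and>
     (\<forall>a b b2 c d d2 f f' g g'.
        f \<in> topspace (Hom P a b) \<and> f' \<in> topspace (Hom P b b2) \<and>
        g \<in> topspace (Hom P c d) \<and> g' \<in> topspace (Hom P d d2) \<longrightarrow>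
        Cmp P (Ot P a c) (Ot P b d) (Ot P b2 d2) (Tm P b b2 d d2 f' g') (Tm P a b c d f g)
          = Tm P a b2 c d2 (Cmp P a b b2 f' f) (Cmp P c d d2 g' g)) \<and>
     (\<forall>a b c d. continuous_map (dprod (Hom P a b) (Hom P c d))
        (Hom P (Ot P a c) (Ot P b d)) (\<lambda>(f, g). Tm P a b c d f g)) \<and>
     \<comment> \<open>strictness: associator is the identity\<close>
     (\<forall>a b c. Ot P (Ot P a b) c = Ot P a (Ot P b c)) \<and>
     (\<forall>a b a' b' a'' b'' f f' f''.
        f \<in> topspace (Hom P a b) \<and> f' \<in> topspace (Hom P a' b') \<and>
        f'' \<in> topspace (Hom P a'' b'') \<longrightarrow>
        Tm P (Ot P a a') (Ot P b b') a'' b'' (Tm P a b a' b' f f') f''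
          = Tm P a b (Ot P a' a'') (Ot P b' b'') f (Tm P a' b' a'' b'' f' f''))"

definition reparam_cat :: "('o, 'm, 'z) smcat_scheme \<Rightarrow> bool" where
  "reparam_cat P \<longleftrightarrow>
     strict_semimonoidal P \<and>
     (\<forall>a b. dcontractible (Hom P a b)) \<and>
     (\<forall>l l' \<phi> l1' l2'. \<phi> \<in> topspace (Hom P l l') \<and> Ot P l1' l2' = l' \<longrightarrow>
        (\<exists>l1 l2 \<phi>1 \<phi>2. Ot P l1 l2 = l \<and> \<phi>1 \<in> topspace (Hom P l1 l1') \<and>
           \<phi>2 \<in> topspace (Hom P l2 l2') \<and> \<phi> = Tm P l1 l1' l2 l2' \<phi>1 \<phi>2))"

definition coend_sum :: "('o, 'm, 'z) smcat_scheme \<Rightarrow> 'o \<Rightarrow> 'o \<Rightarrow> 'o \<Rightarrow> ('o \<times> 'm \<times> 'm) topology" where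
  "coend_sum P m l' l'' = sum_topology (\<lambda>l. dprod (Hom P m (Ot P l' l)) (Hom P l l'')) UNIV"

text \<open>Generating relation: for \<theta> : l0 \<rightarrow> l, \<psi> \<in> P(m, l'+l0), \<phi> \<in> P(l, l''),
  (\<psi>, \<phi>\<theta>) in the l0-summand is identified with ((id \<otimes> \<theta>)\<psi>, \<phi>) in the l-summand.\<close>
definition coend_step :: "('o, 'm, 'z) smcat_scheme \<Rightarrow> 'o \<Rightarrow> 'o \<Rightarrow> 'o \<Rightarrow> (('o \<times> 'm \<times> 'm) \<times> ('o \<times> 'm \<times> 'm)) set" where
  "coend_step P m l' l'' =
     {((l0, (\<psi>, Cmp P l0 l l'' \<phi> \<theta>)),
       (l, (Cmp P m (Ot P l' l0) (Ot P l' l) (Tm P l' l' l0 l (Idm P l') \<theta>) \<psi>, \<phi>))) |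
      l0 l \<theta> \<psi> \<phi>. \<theta> \<in> topspace (Hom P l0 l) \<and> \<psi> \<in> topspace (Hom P m (Ot P l' l0)) \<and>
         \<phi> \<in> topspace (Hom P l l'')}"

definition coend_rel :: "('o, 'm, 'z) smcat_scheme \<Rightarrow> 'o \<Rightarrow> 'o \<Rightarrow> 'o \<Rightarrow> (('o \<times> 'm \<times> 'm) \<times> ('o \<times> 'm \<times> 'm)) set" where
  "coend_rel P m l' l'' =
     {(x, y). x \<in> topspace (coend_sum P m l' l'') \<and> y \<in> topspace (coend_sum P m l' l'') \<and>
        (x, y) \<in> (coend_step P m l' l'' \<union> (coend_step P m l' l'')\<inverse>)\<^sup>*}"

definition coend_top :: "('o, 'm, 'z) smcat_scheme \<Rightarrow> 'o \<Rightarrow> 'o \<Rightarrow> 'o \<Rightarrow> ('o \<times> 'm \<times> 'm) set topology" where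
  "coend_top P m l' l'' = quot_top (coend_sum P m l' l'') (coend_rel P m l' l'')"

definition coend_class :: "('o, 'm, 'z) smcat_scheme \<Rightarrow> 'o \<Rightarrow> 'o \<Rightarrow> 'o \<Rightarrow> 'o \<times> 'm \<times> 'm \<Rightarrow> ('o \<times> 'm \<times> 'm) set" where
  "coend_class P m l' l'' x = coend_rel P m l' l'' `` {x}"

text \<open>P-space structure of the coend: \<theta> : m0 \<rightarrow> m acts by [\<psi>, \<phi>] \<mapsto> [\<psi>\<theta>, \<phi>].\<close>
definition coend_act :: "('o, 'm, 'z) smcat_scheme \<Rightarrow> 'o \<Rightarrow> 'o \<Rightarrow> 'o \<Rightarrow> 'o \<Rightarrow> 'm \<Rightarrow> ('o \<times> 'm \<times> 'm) set \<Rightarrow> ('o \<times> 'm \<times> 'm) set" where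
  "coend_act P l' l'' m0 m \<theta> C =
     coend_rel P m0 l' l'' `` ((\<lambda>(l, \<psi>, \<phi>). (l, Cmp P m0 m (Ot P l' l) \<psi> \<theta>, \<phi>)) ` C)"

text \<open>Functoriality in l': \<alpha> : l' \<rightarrow> k' acts by [\<psi>, \<phi>] \<mapsto> [(\<alpha> \<otimes> id) \<psi>, \<phi>].\<close>
definition coend_mapL :: "('o, 'm, 'z) smcat_scheme \<Rightarrow> 'o \<Rightarrow> 'o \<Rightarrow> 'o \<Rightarrow> 'o \<Rightarrow> 'm \<Rightarrow> ('o \<times> 'm \<times> 'm) set \<Rightarrow> ('o \<times> 'm \<times> 'm) set" where
  "coend_mapL P m l'' l' k' \<alpha> C =
     coend_rel P m k' l'' `` ((\<lambda>(l, \<psi>, \<phi>).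
        (l, Cmp P m (Ot P l' l) (Ot P k' l) (Tm P l' k' l l \<alpha> (Idm P l)) \<psi>, \<phi>)) ` C)"

text \<open>Functoriality in l'': \<beta> : l'' \<rightarrow> k'' acts by [\<psi>, \<phi>] \<mapsto> [\<psi>, \<beta>\<phi>].\<close>
definition coend_mapR :: "('o, 'm, 'z) smcat_scheme \<Rightarrow> 'o \<Rightarrow> 'o \<Rightarrow> 'o \<Rightarrow> 'o \<Rightarrow> 'm \<Rightarrow> ('o \<times> 'm \<times> 'm) set \<Rightarrow> ('o \<times> 'm \<times> 'm) set" where
  "coend_mapR P m l' l'' k'' \<beta> C =
     coend_rel P m l' k'' `` ((\<lambda>(l, \<psi>, \<phi>). (l, \<psi>, Cmp P l l'' k'' \<beta> \<phi>)) ` C)"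

definition coend_map :: "('o, 'm, 'z) smcat_scheme \<Rightarrow> 'o \<Rightarrow> 'o \<Rightarrow> 'o \<Rightarrow> ('o \<times> 'm \<times> 'm) set \<Rightarrow> 'm" where
  "coend_map P m l' l'' C =
     the_elem ((\<lambda>(l, \<psi>, \<phi>). Cmp P m (Ot P l' l) (Ot P l' l'')
                   (Tm P l' l' l l'' (Idm P l') \<phi>) \<psi>) ` C)"

end

theory Submission
  imports Defs
begin

text \<open>This is the co-Yoneda lemma for the functor \<open>l \<mapsto> P(-, l' + l)\<close>: the generating
  relation of the coend, applied with \<open>\<theta> = \<phi>\<close>, identifies every \<open>(\<psi>, \<phi>)\<close> with
  \<open>((id \<otimes> \<phi>) \<psi>, id)\<close> in the \<open>l''\<close>-summand, and by the interchange law it preserves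
  \<open>(id \<otimes> \<phi>) \<psi>\<close>. So \<open>(\<psi>, \<phi>) \<mapsto> (id \<otimes> \<phi>) \<psi>\<close> and \<open>\<psi> \<mapsto> [\<psi>, id]\<close> are mutually inverse;
  both are continuous by the universal properties of the sum and quotient topologies.\<close>

lemma istopology_dgen: "istopology (\<lambda>U. U \<subseteq> topspace X \<and>
      (\<forall>n \<sigma>. continuous_map (simplex_top n) X \<sigma> \<longrightarrow>
          openin (simplex_top n) {x \<in> standard_simplex n. \<sigma> x \<in> U}))"
proof -
  have preimage_eqs: "{x \<in> standard_simplex n. \<sigma> x \<in> S \<inter> T}
      = {x \<in> standard_simplex n. \<sigma> x \<in> S} \<inter> {x \<in> standard_simplex n. \<sigma> x \<in> T}"
    "{x \<in> standard_simplex n. \<sigma> x \<in> \<Union>K} = (\<Union>S\<in>K. {x \<in> standard_simplex n. \<sigma> x \<in> S})"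
    for n \<sigma> S T K by auto
  show ?thesis
    unfolding istopology_def preimage_eqs by (auto intro!: openin_Int openin_Union)
qed

lemma openin_dgen: "openin (dgen X) U \<longleftrightarrow> U \<subseteq> topspace X \<and>
      (\<forall>n \<sigma>. continuous_map (simplex_top n) X \<sigma> \<longrightarrow>
          openin (simplex_top n) {x \<in> standard_simplex n. \<sigma> x \<in> U})"
  unfolding dgen_def topology_inverse'[OF istopology_dgen] by simp

lemma topspace_dgen [simp]: "topspace (dgen X) = topspace X"
proof (rule antisym)
  show "topspace (dgen X) \<subseteq> topspace X"
    using openin_dgen[of X "topspace (dgen X)"] by simp
  have "openin (dgen X) (topspace X)"
    unfolding openin_dgen
    by (auto simp: simplex_top_def continuous_map_def
        intro: openin_subopen[THEN iffD2] openin_topspace)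
  then show "topspace X \<subseteq> topspace (dgen X)"
    by (simp add: openin_subset)
qed

lemma continuous_map_dgen:
  assumes f: "continuous_map X Y f"
  shows "continuous_map (dgen X) (dgen Y) f"
  unfolding continuous_map_def
proof (intro conjI allI impI)
  show "f \<in> topspace (dgen X) \<rightarrow> topspace (dgen Y)"
    using f by (simp add: continuous_map_def)
  fix U assume "openin (dgen Y) U"
  then have U: "openin (simplex_top n) {x \<in> standard_simplex n. \<tau> x \<in> U}"
    if "continuous_map (simplex_top n) Y \<tau>" for n \<tau>
    using that by (simp add: openin_dgen)
  show "openin (dgen X) {x \<in> topspace (dgen X). f x \<in> U}"
  proof (subst openin_dgen, intro conjI allI impI)
    fix n \<sigma> assume \<sigma>: "continuous_map (simplex_top n) X \<sigma>"
    have "{x \<in> standard_simplex n. \<sigma> x \<in> {x \<in> topspace (dgen X). f x \<in> U}}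
        = {x \<in> standard_simplex n. (f \<circ> \<sigma>) x \<in> U}"
      using continuous_map_image_subset_topspace[OF \<sigma>] by (auto simp: simplex_top_def)
    then show "openin (simplex_top n) {x \<in> standard_simplex n. \<sigma> x \<in> {x \<in> topspace (dgen X). f x \<in> U}}"
      using U[OF continuous_map_compose[OF \<sigma> f]] by simp
  qed auto
qed

lemma topspace_dprod [simp]: "topspace (dprod X Y) = topspace X \<times> topspace Y"
  by (simp add: dprod_def)

lemma continuous_map_dprod:
  "continuous_map (prod_topology X Y) (prod_topology X' Y') f \<Longrightarrow>
   continuous_map (dprod X Y) (dprod X' Y') f"
  unfolding dprod_def by (rule continuous_map_dgen)

lemma continuous_map_into_dprod:
  assumes "delta_generated Z" "continuous_map Z (prod_topology X Y) f"
  shows "continuous_map Z (dprod X Y) f"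
  using continuous_map_dgen[OF assms(2)] assms(1)
  unfolding dprod_def delta_generated_def by simp

lemma continuous_map_from_sum_topology:
  assumes "\<And>i. i \<in> I \<Longrightarrow> continuous_map (X i) Y (\<lambda>x. f (i, x))"
  shows "continuous_map (sum_topology X I) Y f"
  unfolding continuous_map_def
proof (intro conjI allI impI)
  show "f \<in> topspace (sum_topology X I) \<rightarrow> topspace Y"
    using assms by (auto simp: continuous_map_def Pi_iff)
  fix U assume "openin Y U"
  then have "openin (X i) {x. (i, x) \<in> {x \<in> topspace (sum_topology X I). f x \<in> U}}" if "i \<in> I" for i
    using assms[OF that] that by (simp add: continuous_map_def)
  then show "openin (sum_topology X I) {x \<in> topspace (sum_topology X I). f x \<in> U}"
    by (auto simp: openin_sum_topology)
qed

lemma istopology_quot_top: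
  "istopology (\<lambda>U. U \<subseteq> topspace X // R \<and> openin X {x \<in> topspace X. R `` {x} \<in> U})"
proof -
  have preimage_eqs: "{x \<in> topspace X. R `` {x} \<in> S \<inter> T}
      = {x \<in> topspace X. R `` {x} \<in> S} \<inter> {x \<in> topspace X. R `` {x} \<in> T}"
    "{x \<in> topspace X. R `` {x} \<in> \<Union>K} = (\<Union>S\<in>K. {x \<in> topspace X. R `` {x} \<in> S})"
    for S T K by auto
  show ?thesis
    unfolding istopology_def preimage_eqs by (auto intro!: openin_Int openin_Union)
qed

lemma openin_quot_top:
  "openin (quot_top X R) U \<longleftrightarrow> U \<subseteq> topspace X // R \<and> openin X {x \<in> topspace X. R `` {x} \<in> U}"
  unfolding quot_top_def topology_inverse'[OF istopology_quot_top] by simp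

lemma topspace_quot_top [simp]: "topspace (quot_top X R) = topspace X // R"
proof (rule antisym)
  show "topspace (quot_top X R) \<subseteq> topspace X // R"
    using openin_quot_top[of X R "topspace (quot_top X R)"] by simp
  have "{x \<in> topspace X. R `` {x} \<in> topspace X // R} = topspace X"
    by (auto simp: quotient_def)
  then have "openin (quot_top X R) (topspace X // R)"
    by (simp add: openin_quot_top)
  then show "topspace X // R \<subseteq> topspace (quot_top X R)"
    by (simp add: openin_subset)
qed

lemma continuous_map_quot_top_class: "continuous_map X (quot_top X R) (\<lambda>x. R `` {x})"
  unfolding continuous_map_def by (auto simp: openin_quot_top intro: quotientI)

lemma the_elem_image_equiv_class:
  "equiv A R \<Longrightarrow> f respects R \<Longrightarrow> a \<in> A \<Longrightarrow> the_elem (f ` (R `` {a})) = f a"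
  by (rule the_elem_image_unique) (auto dest: equiv_class_self congruentD)

lemma continuous_map_from_quot_top:
  assumes R: "equiv (topspace X) R" and f: "continuous_map X Y f" "f respects R"
  shows "continuous_map (quot_top X R) Y (\<lambda>C. the_elem (f ` C))"
  unfolding continuous_map_def
proof (intro conjI allI impI)
  have on_class: "the_elem (f ` (R `` {x})) = f x" if "x \<in> topspace X" for x
    using the_elem_image_equiv_class[OF R f(2) that] .
  then show "(\<lambda>C. the_elem (f ` C)) \<in> topspace (quot_top X R) \<rightarrow> topspace Y"
    using f(1) by (auto elim!: quotientE simp: continuous_map_def)
  fix U assume "openin Y U"
  moreover have "{x \<in> topspace X. R `` {x} \<in> {C \<in> topspace X // R. the_elem (f ` C) \<in> U}}
      = {x \<in> topspace X. f x \<in> U}"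
    using on_class by (auto intro: quotientI)
  ultimately show "openin (quot_top X R) {C \<in> topspace (quot_top X R). the_elem (f ` C) \<in> U}"
    using f(1) by (simp add: openin_quot_top continuous_map_def)
qed

lemma homeomorphic_map_quot_top:
  assumes R: "equiv (topspace X) R"
    and f: "continuous_map X Y f" "f respects R"
    and s: "continuous_map Y X s"
    and sect: "\<And>y. y \<in> topspace Y \<Longrightarrow> f (s y) = y"
    and retract: "\<And>x. x \<in> topspace X \<Longrightarrow> (x, s (f x)) \<in> R"
  shows "homeomorphic_map (quot_top X R) Y (\<lambda>C. the_elem (f ` C))"
  unfolding homeomorphic_map_maps homeomorphic_maps_def
proof (intro exI[of _ "\<lambda>y. R `` {s y}"] conjI ballI)
  show "continuous_map (quot_top X R) Y (\<lambda>C. the_elem (f ` C))"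
    using continuous_map_from_quot_top[OF R f] .
  show "continuous_map Y (quot_top X R) (\<lambda>y. R `` {s y})"
    using continuous_map_compose[OF s continuous_map_quot_top_class] by (simp add: o_def)
  show "the_elem (f ` (R `` {s y})) = y" if "y \<in> topspace Y" for y
    using the_elem_image_equiv_class[OF R f(2)] sect s that
    by (metis continuous_map_def Pi_iff)
  fix C assume "C \<in> topspace (quot_top X R)"
  then obtain x where x: "x \<in> topspace X" and C: "C = R `` {x}"
    by (auto elim: quotientE)
  show "R `` {s (the_elem (f ` C))} = C"
    unfolding C the_elem_image_equiv_class[OF R f(2) x]
    using equiv_class_eq[OF R retract[OF x]] by simp
qed

lemma the_elem_image_Image_image:
  assumes R: "equiv A R" and R': "equiv A' R'"
    and f: "f respects R" and f': "f' respects R'"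
    and C: "C \<in> A // R"
    and T: "\<And>y. y \<in> A \<Longrightarrow> T y \<in> A' \<and> f' (T y) = G (f y)"
  shows "the_elem (f' ` (R' `` (T ` C))) = G (the_elem (f ` C))"
proof -
  obtain x where x: "x \<in> A" and Cx: "C = R `` {x}"
    using C by (auto elim: quotientE)
  have "the_elem (f' ` (R' `` (T ` C))) = G (f x)"
  proof (rule the_elem_image_unique)
    show "R' `` (T ` C) \<noteq> {}"
      using T[OF x] equiv_class_self[OF R x] equiv_class_self[OF R'] Cx by blast
    fix z assume "z \<in> R' `` (T ` C)"
    then obtain y where "(x, y) \<in> R" "(T y, z) \<in> R'"
      using Cx by blast
    then show "f' z = G (f x)"
      using T f f' R by (metis congruentD equiv_class_eq_iff)
  qed
  then show ?thesis
    using the_elem_image_equiv_class[OF R f x] Cx by simp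
qed

lemma equiv_symmetric_closure_on:
  "equiv A {(x, y). x \<in> A \<and> y \<in> A \<and> (x, y) \<in> (S \<union> S\<inverse>)\<^sup>*}"
proof (rule equivI)
  have "(S \<union> S\<inverse>)\<inverse> = S \<union> S\<inverse>" by auto
  then have "(x, y) \<in> (S \<union> S\<inverse>)\<^sup>* \<Longrightarrow> (y, x) \<in> (S \<union> S\<inverse>)\<^sup>*" for x y
    by (metis converse_iff rtrancl_converse)
  then show "sym {(x, y). x \<in> A \<and> y \<in> A \<and> (x, y) \<in> (S \<union> S\<inverse>)\<^sup>*}"
    by (auto intro: symI)
qed (auto intro: refl_onI transI)

locale strict_semimonoidal_cat =
  fixes P :: "('o, 'm) smcat"
  assumes strict_semimonoidal: "strict_semimonoidal P"
begin

lemma enriched_category: "enriched_category P"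
  using strict_semimonoidal by (simp add: strict_semimonoidal_def)

lemma delta_generated_Hom: "delta_generated (Hom P a b)"
  using enriched_category by (simp add: enriched_category_def)

lemma Idm_in_hom [simp]: "Idm P a \<in> hom P a a"
  using enriched_category by (simp add: enriched_category_def)

lemma Cmp_in_hom [simp]: "f \<in> hom P a b \<Longrightarrow> g \<in> hom P b c \<Longrightarrow> Cmp P a b c g f \<in> hom P a c"
  using enriched_category by (simp add: enriched_category_def)

lemma Cmp_Idm_right [simp]: "f \<in> hom P a b \<Longrightarrow> Cmp P a a b f (Idm P a) = f"
  using enriched_category by (simp add: enriched_category_def)

lemma Cmp_Idm_left [simp]: "f \<in> hom P a b \<Longrightarrow> Cmp P a b b (Idm P b) f = f"
  using enriched_category by (simp add: enriched_category_def)

lemma Cmp_assoc: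
  "f \<in> hom P a b \<Longrightarrow> g \<in> hom P b c \<Longrightarrow> h \<in> hom P c d \<Longrightarrow>
   Cmp P a c d h (Cmp P a b c g f) = Cmp P a b d (Cmp P b c d h g) f"
  using enriched_category by (simp add: enriched_category_def)

lemma continuous_map_Cmp:
  "continuous_map (dprod (Hom P b c) (Hom P a b)) (Hom P a c) (\<lambda>(g, f). Cmp P a b c g f)"
  using enriched_category by (simp add: enriched_category_def)

lemma Tm_in_hom [simp]:
  "f \<in> hom P a b \<Longrightarrow> g \<in> hom P c d \<Longrightarrow> Tm P a b c d f g \<in> hom P (Ot P a c) (Ot P b d)"
  using strict_semimonoidal by (simp add: strict_semimonoidal_def)

lemma Tm_Idm [simp]: "Tm P a a c c (Idm P a) (Idm P c) = Idm P (Ot P a c)"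
  using strict_semimonoidal by (simp add: strict_semimonoidal_def)

lemma Cmp_Tm:
  "f \<in> hom P a b \<Longrightarrow> f' \<in> hom P b b2 \<Longrightarrow> g \<in> hom P c d \<Longrightarrow> g' \<in> hom P d d2 \<Longrightarrow>
   Cmp P (Ot P a c) (Ot P b d) (Ot P b2 d2) (Tm P b b2 d d2 f' g') (Tm P a b c d f g)
     = Tm P a b2 c d2 (Cmp P a b b2 f' f) (Cmp P c d d2 g' g)"
  using strict_semimonoidal by (simp add: strict_semimonoidal_def)

lemma continuous_map_Tm:
  "continuous_map (dprod (Hom P a b) (Hom P c d)) (Hom P (Ot P a c) (Ot P b d))
     (\<lambda>(f, g). Tm P a b c d f g)"
  using strict_semimonoidal by (simp add: strict_semimonoidal_def)

definition coend_eval :: "'o \<Rightarrow> 'o \<Rightarrow> 'o \<Rightarrow> 'o \<times> 'm \<times> 'm \<Rightarrow> 'm" where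
  "coend_eval m l' l'' =
     (\<lambda>(l, \<psi>, \<phi>). Cmp P m (Ot P l' l) (Ot P l' l'') (Tm P l' l' l l'' (Idm P l') \<phi>) \<psi>)"

lemma coend_eval_simp [simp]:
  "coend_eval m l' l'' (l, \<psi>, \<phi>) = Cmp P m (Ot P l' l) (Ot P l' l'') (Tm P l' l' l l'' (Idm P l') \<phi>) \<psi>"
  by (simp add: coend_eval_def)

lemma coend_map_eq: "coend_map P m l' l'' C = the_elem (coend_eval m l' l'' ` C)"
  by (simp add: coend_map_def coend_eval_def)

lemma mem_coend_sum [simp]:
  "(l, \<psi>, \<phi>) \<in> topspace (coend_sum P m l' l'') \<longleftrightarrow> \<psi> \<in> hom P m (Ot P l' l) \<and> \<phi> \<in> hom P l l''"
  by (simp add: coend_sum_def)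

lemma topspace_coend_top:
  "topspace (coend_top P m l' l'') = topspace (coend_sum P m l' l'') // coend_rel P m l' l''"
  by (simp add: coend_top_def)

lemma equiv_coend_rel: "equiv (topspace (coend_sum P m l' l'')) (coend_rel P m l' l'')"
  unfolding coend_rel_def by (rule equiv_symmetric_closure_on)

lemma coend_eval_coend_step:
  assumes "(x, y) \<in> coend_step P m l' l''"
  shows "coend_eval m l' l'' x = coend_eval m l' l'' y"
proof -
  obtain l0 l \<theta> \<psi> \<phi> where
    x: "x = (l0, \<psi>, Cmp P l0 l l'' \<phi> \<theta>)" and
    y: "y = (l, Cmp P m (Ot P l' l0) (Ot P l' l) (Tm P l' l' l0 l (Idm P l') \<theta>) \<psi>, \<phi>)" and
    hom: "\<theta> \<in> hom P l0 l" "\<psi> \<in> hom P m (Ot P l' l0)" "\<phi> \<in> hom P l l''"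
    using assms unfolding coend_step_def by blast
  have "coend_eval m l' l'' y = Cmp P m (Ot P l' l0) (Ot P l' l'')
      (Cmp P (Ot P l' l0) (Ot P l' l) (Ot P l' l'')
        (Tm P l' l' l l'' (Idm P l') \<phi>) (Tm P l' l' l0 l (Idm P l') \<theta>)) \<psi>"
    using hom by (simp add: y Cmp_assoc)
  also have "\<dots> = coend_eval m l' l'' x"
    using hom by (simp add: x Cmp_Tm)
  finally show ?thesis ..
qed

lemma coend_eval_respects: "coend_eval m l' l'' respects coend_rel P m l' l''"
proof (rule congruentI)
  fix x y assume "(x, y) \<in> coend_rel P m l' l''"
  then have "(x, y) \<in> (coend_step P m l' l'' \<union> (coend_step P m l' l'')\<inverse>)\<^sup>*"
    by (simp add: coend_rel_def)
  then show "coend_eval m l' l'' x = coend_eval m l' l'' y"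
    by induction (auto dest: coend_eval_coend_step)
qed

lemma coend_rel_unit:
  assumes "x \<in> topspace (coend_sum P m l' l'')"
  shows "(x, (l'', coend_eval m l' l'' x, Idm P l'')) \<in> coend_rel P m l' l''"
proof -
  obtain l \<psi> \<phi> where x: "x = (l, \<psi>, \<phi>)" and hom: "\<psi> \<in> hom P m (Ot P l' l)" "\<phi> \<in> hom P l l''"
    using assms by (cases x) auto
  have "((l, \<psi>, Cmp P l l'' l'' (Idm P l'') \<phi>),
         (l'', Cmp P m (Ot P l' l) (Ot P l' l'') (Tm P l' l' l l'' (Idm P l') \<phi>) \<psi>, Idm P l''))
        \<in> coend_step P m l' l''"
    unfolding coend_step_def using hom Idm_in_hom by blast
  then show ?thesis
    using hom by (auto simp: x coend_rel_def)
qed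

lemma coend_map_class:
  "x \<in> topspace (coend_sum P m l' l'') \<Longrightarrow>
   coend_map P m l' l'' (coend_rel P m l' l'' `` {x}) = coend_eval m l' l'' x"
  unfolding coend_map_eq by (rule the_elem_image_equiv_class[OF equiv_coend_rel coend_eval_respects])

lemma continuous_map_coend_eval:
  "continuous_map (coend_sum P m l' l'') (Hom P m (Ot P l' l'')) (coend_eval m l' l'')"
  unfolding coend_sum_def
proof (rule continuous_map_from_sum_topology)
  fix l
  have "continuous_map (Hom P l l'') (dprod (Hom P l' l') (Hom P l l'')) (\<lambda>\<phi>. (Idm P l', \<phi>))"
    by (intro continuous_map_into_dprod delta_generated_Hom continuous_map_pairedI) auto
  from continuous_map_compose[OF this continuous_map_Tm]
  have "continuous_map (Hom P l l'') (Hom P (Ot P l' l) (Ot P l' l''))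
      (\<lambda>\<phi>. Tm P l' l' l l'' (Idm P l') \<phi>)"
    by (simp add: o_def)
  then have "continuous_map (prod_topology (Hom P m (Ot P l' l)) (Hom P l l''))
      (prod_topology (Hom P (Ot P l' l) (Ot P l' l'')) (Hom P m (Ot P l' l)))
      (\<lambda>(\<psi>, \<phi>). (Tm P l' l' l l'' (Idm P l') \<phi>, \<psi>))"
    unfolding case_prod_beta
    by (intro continuous_map_pairedI continuous_map_fst continuous_map_compose[OF continuous_map_snd, unfolded o_def])
  from continuous_map_compose[OF continuous_map_dprod[OF this] continuous_map_Cmp]
  show "continuous_map (dprod (Hom P m (Ot P l' l)) (Hom P l l'')) (Hom P m (Ot P l' l''))
      (\<lambda>x. coend_eval m l' l'' (l, x))"
    by (simp add: o_def case_prod_beta coend_eval_def)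
qed

lemma continuous_map_coend_unit:
  "continuous_map (Hom P m (Ot P l' l'')) (coend_sum P m l' l'') (\<lambda>\<psi>. (l'', \<psi>, Idm P l''))"
proof -
  have "continuous_map (Hom P m (Ot P l' l'')) (dprod (Hom P m (Ot P l' l'')) (Hom P l'' l''))
      (\<lambda>\<psi>. (\<psi>, Idm P l''))"
    by (intro continuous_map_into_dprod delta_generated_Hom continuous_map_pairedI) auto
  from continuous_map_compose[OF this continuous_map_component_injection[of l'' UNIV
        "\<lambda>l. dprod (Hom P m (Ot P l' l)) (Hom P l l'')"]]
  show ?thesis
    by (simp add: coend_sum_def o_def)
qed

lemma homeomorphic_map_coend_map:
  "homeomorphic_map (coend_top P m l' l'') (Hom P m (Ot P l' l'')) (coend_map P m l' l'')"
  unfolding coend_top_def coend_map_eq[abs_def]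
  by (rule homeomorphic_map_quot_top[OF equiv_coend_rel continuous_map_coend_eval
        coend_eval_respects continuous_map_coend_unit _ coend_rel_unit]) simp

lemma coend_map_Image_image:
  assumes "C \<in> topspace (coend_top P m l' l'')"
    and "\<And>y. y \<in> topspace (coend_sum P m l' l'') \<Longrightarrow>
        T y \<in> topspace (coend_sum P n k' k'') \<and> coend_eval n k' k'' (T y) = G (coend_eval m l' l'' y)"
  shows "coend_map P n k' k'' (coend_rel P n k' k'' `` (T ` C)) = G (coend_map P m l' l'' C)"
  unfolding coend_map_eq
  using assms by (intro the_elem_image_Image_image[OF equiv_coend_rel equiv_coend_rel
        coend_eval_respects coend_eval_respects]) (auto simp: topspace_coend_top)

lemma coend_map_coend_act:
  assumes "\<theta> \<in> hom P m0 m" "C \<in> topspace (coend_top P m l' l'')"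
  shows "coend_map P m0 l' l'' (coend_act P l' l'' m0 m \<theta> C)
       = Cmp P m0 m (Ot P l' l'') (coend_map P m l' l'' C) \<theta>"
  unfolding coend_act_def
  using assms by (intro coend_map_Image_image) (auto simp: Cmp_assoc)

lemma coend_map_coend_mapL:
  assumes "\<alpha> \<in> hom P l' k'" "C \<in> topspace (coend_top P m l' l'')"
  shows "coend_map P m k' l'' (coend_mapL P m l'' l' k' \<alpha> C)
       = Cmp P m (Ot P l' l'') (Ot P k' l'') (Tm P l' k' l'' l'' \<alpha> (Idm P l'')) (coend_map P m l' l'' C)"
  unfolding coend_mapL_def
  using assms by (intro coend_map_Image_image) (auto simp: Cmp_assoc Cmp_Tm)

lemma coend_map_coend_mapR:
  assumes "\<beta> \<in> hom P l'' k''" "C \<in> topspace (coend_top P m l' l'')"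
  shows "coend_map P m l' k'' (coend_mapR P m l' l'' k'' \<beta> C)
       = Cmp P m (Ot P l' l'') (Ot P l' k'') (Tm P l' l' l'' k'' (Idm P l') \<beta>) (coend_map P m l' l'' C)"
  unfolding coend_mapR_def
  using assms by (intro coend_map_Image_image) (auto simp: Cmp_assoc Cmp_Tm)

end

theorem lemma3p2:
  fixes P :: "('o, 'm) smcat"
  assumes "reparam_cat P"
  shows
    "(\<forall>m l' l''. homeomorphic_map (coend_top P m l' l'') (Hom P m (Ot P l' l''))
                   (coend_map P m l' l'')) \<and>
     (\<forall>m l' l'' l \<psi> \<phi>. \<psi> \<in> topspace (Hom P m (Ot P l' l)) \<and> \<phi> \<in> topspace (Hom P l l'') \<longrightarrow>
        coend_map P m l' l'' (coend_class P m l' l'' (l, \<psi>, \<phi>))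
          = Cmp P m (Ot P l' l) (Ot P l' l'') (Tm P l' l' l l'' (Idm P l') \<phi>) \<psi>) \<and>
     (\<forall>m0 m l' l'' \<theta> C. \<theta> \<in> topspace (Hom P m0 m) \<and> C \<in> topspace (coend_top P m l' l'') \<longrightarrow>
        coend_map P m0 l' l'' (coend_act P l' l'' m0 m \<theta> C)
          = Cmp P m0 m (Ot P l' l'') (coend_map P m l' l'' C) \<theta>) \<and>
     (\<forall>m l' k' l'' \<alpha> C. \<alpha> \<in> topspace (Hom P l' k') \<and> C \<in> topspace (coend_top P m l' l'') \<longrightarrow>
        coend_map P m k' l'' (coend_mapL P m l'' l' k' \<alpha> C)
          = Cmp P m (Ot P l' l'') (Ot P k' l'') (Tm P l' k' l'' l'' \<alpha> (Idm P l''))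
              (coend_map P m l' l'' C)) \<and>
     (\<forall>m l' l'' k'' \<beta> C. \<beta> \<in> topspace (Hom P l'' k'') \<and> C \<in> topspace (coend_top P m l' l'') \<longrightarrow>
        coend_map P m l' k'' (coend_mapR P m l' l'' k'' \<beta> C)
          = Cmp P m (Ot P l' l'') (Ot P l' k'') (Tm P l' l' l'' k'' (Idm P l') \<beta>)
              (coend_map P m l' l'' C))"
proof -
  interpret strict_semimonoidal_cat P
    using assms by unfold_locales (simp add: reparam_cat_def)
  show ?thesis
    by (simp add: homeomorphic_map_coend_map coend_class_def coend_map_class
        coend_map_coend_act coend_map_coend_mapL coend_map_coend_mapR)
qed

end
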